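(* Let $\Sigma=\{t=0\}$ in $2+1$ dimensional Minkowski space-time $\mathbb{R}^{2,1}$, and let $\mathcal{H}$ be the set of future Cauchy horizons $H^+(K)$ where $K$ ranges over compact convex subsets of $\Sigma$ with nonempty interior, with the topology on $\mathcal{H}$ induced by the Hausdorff distance between the corresponding sets $K$. Then the subset of densely nondifferentiable horizons is dense in $\mathcal{H}$: for every compact convex $K\subset\Sigma$ with nonempty interior and every $\varepsilon>0$ there exists a compact convex $K'\subset\Sigma$ with Hausdorff distance $d_H(K,K')<\varepsilon$ such that the set of points at which $H^+(K')$ fails to be differentiable is dense in $H^+(K')$. *)

theory Defs
  imports "HOL-Analysis.Analysis"
begin

text \<open>Hausdorff distance (for nonempty compact sets, as used here).\<close>
definition hausdorff_dist :: "'a::metric_space set \<Rightarrow> 'a set \<Rightarrow> real" where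
  "hausdorff_dist A B = max (SUP a\<in>A. infdist a B) (SUP b\<in>B. infdist b A)"

type_synonym mpoint = "(real^2) \<times> real"

definition causal_le :: "mpoint \<Rightarrow> mpoint \<Rightarrow> bool" where
  "causal_le q p \<longleftrightarrow> snd q \<le> snd p \<and> dist (fst q) (fst p) \<le> snd p - snd q"

definition chron_lt :: "mpoint \<Rightarrow> mpoint \<Rightarrow> bool" where
  "chron_lt q p \<longleftrightarrow> dist (fst q) (fst p) < snd p - snd q"

definition causal_past :: "mpoint \<Rightarrow> mpoint set" where
  "causal_past p = {q. causal_le q p}"

definition chron_past :: "mpoint set \<Rightarrow> mpoint set" where
  "chron_past A = {q. \<exists>p\<in>A. chron_lt q p}"

definition Sigma_embed :: "(real^2) set \<Rightarrow> mpoint set" where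
  "Sigma_embed K = (\<lambda>x. (x, 0)) ` K"

text \<open>Future domain of dependence D^+(K) of K \<subseteq> Sigma: points p to the future of Sigma
  such that every past-inextendible causal curve through p meets K; in Minkowski space
  this is the set of p with t \<ge> 0 and J^-(p) \<inter> Sigma \<subseteq> K.\<close>
definition future_domain :: "(real^2) set \<Rightarrow> mpoint set" where
  "future_domain K = {p. snd p \<ge> 0 \<and> causal_past p \<inter> Sigma_embed UNIV \<subseteq> Sigma_embed K}"

definition future_cauchy_horizon :: "(real^2) set \<Rightarrow> mpoint set" where
  "future_cauchy_horizon K = closure (future_domain K) - chron_past (future_domain K)"

text \<open>A set H (achronal, hence locally a graph over space) is differentiable at p if near p
  it coincides with the graph t = g(x) of a function g differentiable at the spatial
  coordinate of p.\<close>
definition set_differentiable_at :: "mpoint set \<Rightarrow> mpoint \<Rightarrow> bool" where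
  "set_differentiable_at H p \<longleftrightarrow>
     (\<exists>r>0. \<exists>g :: real^2 \<Rightarrow> real. g differentiable (at (fst p)) \<and>
        H \<inter> ball p r = {(y, g y) | y. True} \<inter> ball p r)"

definition nondiff_points :: "mpoint set \<Rightarrow> mpoint set" where
  "nondiff_points H = {p \<in> H. \<not> set_differentiable_at H p}"

end

theory Submission
  imports Defs
begin

(* For a closed S other than the whole plane, the future Cauchy horizon of S is the graph
   t = d(x), x in S, of the distance d to the complement of S. So it suffices to approximate K
   by a compact convex S for which d fails to be differentiable on a dense subset of S.

   If d is differentiable on a ball B inside S, then every y in B has a unique nearest boundary
   point Z y, the map Z is continuous on B, and the inner ball of radius d y about y touches the
   boundary at Z y, so Z y is not a corner of S; for convex S, Z is moreover not constant on B.

   Let (e k) be dense in R^2, c a point of K, and S = {x. dist(x, K) + eta * (SUM k. b k *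
   |e k . (x - c)|) <= delta}. Each absolute value creases S along the line through c orthogonal
   to e k, so every boundary point of S on such a line is a corner. Seen from c, the connected set
   Z(B) contains boundary points in two different directions; some e k separates them, so Z(B)
   meets the line orthogonal to e k, at a corner: contradiction. *)

section \<open>The Cauchy horizon as the graph of the distance to the complement\<close>

lemma cball_subset_iff_infdist_compl:
  fixes S :: "'a::real_normed_vector set"
  assumes "closed S" "S \<noteq> UNIV" "0 \<le> t"
  shows "cball x t \<subseteq> S \<longleftrightarrow> x \<in> S \<and> t \<le> infdist x (- S)"
proof
  assume sub: "cball x t \<subseteq> S"
  have "- S \<noteq> {}"
    using \<open>S \<noteq> UNIV\<close> by auto
  then have "t \<le> infdist x (- S)"
    unfolding infdist_notempty[OF \<open>- S \<noteq> {}\<close>]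
    using sub by (intro cINF_greatest) (auto simp: subset_iff not_le)
  then show "x \<in> S \<and> t \<le> infdist x (- S)"
    using sub \<open>0 \<le> t\<close> by auto
next
  assume x: "x \<in> S \<and> t \<le> infdist x (- S)"
  have ball: "ball x t \<subseteq> S"
  proof
    fix y assume "y \<in> ball x t"
    then show "y \<in> S"
      using x infdist_le[of y "- S" x] by (force simp: dist_commute)
  qed
  show "cball x t \<subseteq> S"
  proof (cases "t = 0")
    case False
    then have "cball x t = closure (ball x t)"
      using \<open>0 \<le> t\<close> by simp
    also have "\<dots> \<subseteq> S"
      using ball \<open>closed S\<close> by (rule closure_minimal)
    finally show ?thesis .
  qed (use x in simp)
qed

lemma future_domain_eq:
  assumes "closed S" "S \<noteq> UNIV"
  shows "future_domain S = {(x, t). x \<in> S \<and> 0 \<le> t \<and> t \<le> infdist x (- S)}"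
proof -
  have "(x, t) \<in> future_domain S \<longleftrightarrow> 0 \<le> t \<and> cball x t \<subseteq> S" for x t
    unfolding future_domain_def causal_past_def Sigma_embed_def causal_le_def
    by (auto simp: dist_commute subset_iff image_iff)
  then show ?thesis
    using cball_subset_iff_infdist_compl[OF assms] by auto
qed

lemma future_cauchy_horizon_eq_graph:
  assumes "closed S" "S \<noteq> UNIV"
  shows "future_cauchy_horizon S = (\<lambda>x. (x, infdist x (- S))) ` S"
proof -
  define D where "D = {(x, t). x \<in> S \<and> 0 \<le> t \<and> t \<le> infdist x (- S)}"
  have "closed D"
  proof -
    have "D = fst -` S \<inter> {p. 0 \<le> snd p} \<inter> {p. snd p \<le> infdist (fst p) (- S)}"
      by (auto simp: D_def)
    then show ?thesis
      using \<open>closed S\<close> by (auto intro!: closed_Int closed_vimage_fst closed_Collect_le continuous_intros)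
  qed
  have top_not_past: "(x, infdist x (- S)) \<notin> chron_past D" for x
  proof
    assume "(x, infdist x (- S)) \<in> chron_past D"
    then obtain y t where "t \<le> infdist y (- S)" "dist x y < t - infdist x (- S)"
      unfolding chron_past_def chron_lt_def D_def by auto
    then show False
      using infdist_triangle[of y "- S" x] by (simp add: dist_commute)
  qed
  have below_past: "(x, t) \<in> chron_past D" if "x \<in> S" "0 \<le> t" "t < infdist x (- S)" for x t
    using that unfolding chron_past_def chron_lt_def D_def
    by (intro CollectI bexI[of _ "(x, infdist x (- S))"]) auto
  have "D - chron_past D = (\<lambda>x. (x, infdist x (- S))) ` S"
  proof (intro set_eqI iffI)
    fix p assume "p \<in> D - chron_past D"
    then show "p \<in> (\<lambda>x. (x, infdist x (- S))) ` S"
      using below_past unfolding D_def by (cases p) (force simp: not_less)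
  next
    fix p assume "p \<in> (\<lambda>x. (x, infdist x (- S))) ` S"
    then show "p \<in> D - chron_past D"
      using top_not_past by (auto simp: D_def infdist_nonneg)
  qed
  then show ?thesis
    unfolding future_cauchy_horizon_def future_domain_eq[OF assms, folded D_def]
    using \<open>closed D\<close> by (simp add: closure_closed)
qed

lemma nondiff_points_graphI:
  fixes f :: "real^2 \<Rightarrow> real"
  assumes "y \<in> S" and nd: "\<not> f differentiable (at y)"
  shows "(y, f y) \<in> nondiff_points ((\<lambda>x. (x, f x)) ` S)"
proof -
  let ?H = "(\<lambda>x. (x, f x)) ` S"
  have "\<not> set_differentiable_at ?H (y, f y)"
  proof
    assume "set_differentiable_at ?H (y, f y)"
    then obtain r g where "r > 0" and g: "g differentiable (at y)"
      and eq: "?H \<inter> ball (y, f y) r = {(z, g z) | z. True} \<inter> ball (y, f y) r"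
      unfolding set_differentiable_at_def by auto
    have "(y, f y) \<in> {(z, g z) | z. True}"
      using eq \<open>r > 0\<close> \<open>y \<in> S\<close> by fastforce
    then have gy: "g y = f y" by auto
    have "isCont g y"
      using g by (rule differentiable_imp_continuous_within)
    then obtain d where "d > 0" and d: "\<And>z. dist z y < d \<Longrightarrow> dist (g z) (g y) < r / 2"
      using \<open>r > 0\<close> unfolding continuous_at_eps_delta by (metis half_gt_zero)
    have agree: "g z = f z" if "dist z y < min d (r / 2)" for z
    proof -
      have "dist (z, g z) (y, f y) \<le> dist z y + dist (g z) (g y)"
        unfolding dist_Pair_Pair gy[symmetric] by (rule sqrt_sum_squares_le_sum_abs[THEN order_trans]) simp
      also have "\<dots> < r"
        using that d[of z] by (simp add: dist_commute)
      finally have "(z, g z) \<in> {(z, g z) | z. True} \<inter> ball (y, f y) r"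
        by (simp add: dist_commute)
      then have "(z, g z) \<in> ?H"
        using eq by blast
      then show ?thesis by auto
    qed
    have "f differentiable (at y)"
      using \<open>d > 0\<close> \<open>r > 0\<close>
      by (intro differentiable_transform_within[OF g _ UNIV_I, of "min d (r / 2)"]) (use agree in auto)
    with nd show False by contradiction
  qed
  then show ?thesis
    unfolding nondiff_points_def using \<open>y \<in> S\<close> by blast
qed

lemma graph_subset_closure_nondiff_points:
  fixes f :: "real^2 \<Rightarrow> real"
  assumes "closed S" "continuous_on S f"
    and dense: "S \<subseteq> closure {y \<in> S. \<not> f differentiable (at y)}"
  shows "(\<lambda>x. (x, f x)) ` S \<subseteq> closure (nondiff_points ((\<lambda>x. (x, f x)) ` S))"
proof -
  let ?N = "{y \<in> S. \<not> f differentiable (at y)}"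
  have "closure ?N \<subseteq> S"
    using \<open>closed S\<close> by (intro closure_minimal) auto
  then have "continuous_on (closure ?N) (\<lambda>x. (x, f x))"
    by (intro continuous_intros continuous_on_subset[OF \<open>continuous_on S f\<close>])
  moreover have "(\<lambda>x. (x, f x)) ` ?N \<subseteq> closure (nondiff_points ((\<lambda>x. (x, f x)) ` S))"
    using nondiff_points_graphI closure_subset by blast
  ultimately have "(\<lambda>x. (x, f x)) ` closure ?N \<subseteq> closure (nondiff_points ((\<lambda>x. (x, f x)) ` S))"
    by (rule image_closure_subset[OF _ closed_closure])
  then show ?thesis
    using dense by blast
qed

section \<open>Nearest points and differentiability of the distance function\<close>

lemma infdist_has_derivative_nearest:
  fixes F :: "'a::real_inner set"
  assumes D: "((\<lambda>x. infdist x F) has_derivative D) (at y)"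
    and z: "z \<in> F" "dist y z = infdist y F" and "y \<noteq> z"
  shows "D = (\<lambda>h. h \<bullet> sgn (y - z))"
proof -
  have "((\<lambda>x. norm (x - z)) has_derivative (\<lambda>h. h \<bullet> sgn (y - z))) (at y)"
    using has_derivative_compose[OF has_derivative_diff[OF has_derivative_ident has_derivative_const]
        has_derivative_norm] \<open>y \<noteq> z\<close> by simp
  then have "((\<lambda>x. norm (x - z) - infdist x F) has_derivative (\<lambda>h. h \<bullet> sgn (y - z) - D h)) (at y)"
    using D by (rule has_derivative_diff)
  moreover have "\<forall>\<^sub>F x in at y. norm (y - z) - infdist y F \<le> norm (x - z) - infdist x F"
    using z infdist_le[OF z(1)] by (simp add: dist_norm)
  ultimately have "(\<lambda>h. h \<bullet> sgn (y - z) - D h) = (\<lambda>h. 0)"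
    by (rule has_derivative_local_min)
  then show ?thesis
    by (metis (no_types) eq_iff_diff_eq_0)
qed

lemma nearest_point_unique_if_differentiable:
  fixes F :: "'a::real_inner set"
  assumes "(\<lambda>x. infdist x F) differentiable (at y)" "0 < infdist y F"
    and z1: "z1 \<in> F" "dist y z1 = infdist y F"
    and z2: "z2 \<in> F" "dist y z2 = infdist y F"
  shows "z1 = z2"
proof -
  obtain D where D: "((\<lambda>x. infdist x F) has_derivative D) (at y)"
    using assms(1) unfolding differentiable_def by blast
  have "y \<noteq> z1" "y \<noteq> z2"
    using z1 z2 \<open>0 < infdist y F\<close> by auto
  then have "(\<lambda>h. h \<bullet> sgn (y - z1)) = (\<lambda>h. h \<bullet> sgn (y - z2))"
    using infdist_has_derivative_nearest[OF D z1] infdist_has_derivative_nearest[OF D z2] by simp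
  then have "sgn (y - z1) = sgn (y - z2)"
    by (metis vector_eq_ldot)
  moreover have "norm (y - z1) = norm (y - z2)"
    using z1 z2 by (simp add: dist_norm)
  moreover have "v = norm v *\<^sub>R sgn v" for v :: 'a
    by (cases "v = 0") (simp_all add: sgn_div_norm)
  ultimately have "y - z1 = y - z2"
    by metis
  then show ?thesis by simp
qed

lemma continuous_on_nearest_point:
  fixes F :: "'a::heine_borel set"
  assumes "closed F"
    and Z: "\<And>y. y \<in> B \<Longrightarrow> Z y \<in> F \<and> dist y (Z y) = infdist y F"
    and unique: "\<And>y z. y \<in> B \<Longrightarrow> z \<in> F \<Longrightarrow> dist y z = infdist y F \<Longrightarrow> z = Z y"
  shows "continuous_on B Z"
  unfolding continuous_on_iff
proof (intro ballI allI impI)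
  fix y \<epsilon> assume y: "y \<in> B" and "(\<epsilon>::real) > 0"
  define C where "C = F \<inter> cball y (infdist y F + 1) \<inter> {z. \<epsilon> \<le> dist z (Z y)}"
  have "compact C"
    unfolding C_def
    by (intro compact_Int_closed closed_Int_compact \<open>closed F\<close> compact_cball closed_Collect_le
        continuous_intros)
  have "\<exists>m>0. \<forall>z\<in>C. m \<le> dist y z - infdist y F"
  proof (cases "C = {}")
    case False
    moreover have "continuous_on C (dist y)"
      by (intro continuous_intros)
    ultimately obtain z0 where "z0 \<in> C" and z0: "\<And>z. z \<in> C \<Longrightarrow> dist y z0 \<le> dist y z"
      using continuous_attains_inf[OF \<open>compact C\<close>] by blast
    have "infdist y F < dist y z0"
      using \<open>z0 \<in> C\<close> \<open>\<epsilon> > 0\<close> unique[OF y] infdist_le[of z0 F y] by (force simp: C_def)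
    then show ?thesis
      using z0 by (intro exI[of _ "dist y z0 - infdist y F"]) auto
  qed (auto intro: exI[of _ 1])
  then obtain m where "m > 0" and m: "\<And>z. z \<in> C \<Longrightarrow> m \<le> dist y z - infdist y F"
    by blast
  show "\<exists>\<delta>>0. \<forall>y'\<in>B. dist y' y < \<delta> \<longrightarrow> dist (Z y') (Z y) < \<epsilon>"
  proof (intro exI[of _ "min (m / 2) (1 / 2)"] conjI ballI impI)
    fix y' assume "y' \<in> B" "dist y' y < min (m / 2) (1 / 2)"
    moreover have "dist y (Z y') - infdist y F \<le> 2 * dist y' y"
      using Z[OF \<open>y' \<in> B\<close>] dist_triangle[of y "Z y'" y'] infdist_triangle[of y' F y]
      by (simp add: dist_commute)
    ultimately have "Z y' \<notin> C" "Z y' \<in> cball y (infdist y F + 1)"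
      using m[of "Z y'"] by (auto simp: dist_commute)
    then show "dist (Z y') (Z y) < \<epsilon>"
      using Z[OF \<open>y' \<in> B\<close>] by (auto simp: C_def)
  qed (use \<open>m > 0\<close> in auto)
qed

section \<open>Corners of convex sets\<close>

definition corner :: "'a::real_inner set \<Rightarrow> 'a \<Rightarrow> bool" where
  "corner S z \<longleftrightarrow> (\<exists>v1 v2. v1 \<noteq> 0 \<and> v2 \<noteq> 0 \<and> (\<forall>\<mu>>0. v1 \<noteq> \<mu> *\<^sub>R v2) \<and>
     (\<forall>x\<in>S. v1 \<bullet> (x - z) \<le> 0 \<and> v2 \<bullet> (x - z) \<le> 0))"

lemma normal_at_inner_ball_contact:
  fixes S :: "'a::real_inner set"
  assumes "cball y r \<subseteq> S" "dist y z = r" "0 < r"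
    and v: "v \<noteq> 0" "\<forall>x\<in>S. v \<bullet> (x - z) \<le> 0"
  shows "\<exists>\<alpha>>0. v = \<alpha> *\<^sub>R (z - y)"
proof -
  have nz: "norm (z - y) = r"
    using \<open>dist y z = r\<close> by (simp add: dist_norm norm_minus_commute)
  have "y + (r / norm v) *\<^sub>R v \<in> S"
    using assms by (auto simp: dist_norm)
  then have "v \<bullet> (y + (r / norm v) *\<^sub>R v - z) \<le> 0"
    using v by blast
  moreover have "v \<bullet> (y + (r / norm v) *\<^sub>R v - z) = v \<bullet> (y - z) + r * norm v"
    using v by (simp add: inner_diff_right inner_add_right dot_square_norm power2_eq_square)
  ultimately have "v \<bullet> (y - z) + r * norm v \<le> 0"
    by simp
  then have "norm v * norm (z - y) \<le> v \<bullet> (z - y)"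
    using nz by (simp add: inner_diff_right algebra_simps)
  then have "v \<bullet> (z - y) = norm v * norm (z - y)"
    using norm_cauchy_schwarz[of v "z - y"] by simp
  then have "r *\<^sub>R v = norm v *\<^sub>R (z - y)"
    using nz norm_cauchy_schwarz_eq[of v "z - y"] by simp
  then have "(1 / r) *\<^sub>R (r *\<^sub>R v) = (norm v / r) *\<^sub>R (z - y)"
    by simp
  then have "v = (norm v / r) *\<^sub>R (z - y)"
    using \<open>0 < r\<close> by simp
  then show ?thesis
    using v \<open>0 < r\<close> by (intro exI[of _ "norm v / r"]) simp
qed

lemma not_corner_at_inner_ball_contact:
  fixes S :: "'a::real_inner set"
  assumes "cball y r \<subseteq> S" "dist y z = r" "0 < r"
  shows "\<not> corner S z"
proof
  assume "corner S z"
  then obtain v1 v2 where v: "v1 \<noteq> 0" "v2 \<noteq> 0" "\<forall>\<mu>>0. v1 \<noteq> \<mu> *\<^sub>R v2"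
    and n: "\<forall>x\<in>S. v1 \<bullet> (x - z) \<le> 0" "\<forall>x\<in>S. v2 \<bullet> (x - z) \<le> 0"
    unfolding corner_def ball_conj_distrib by blast
  obtain \<alpha> where "\<alpha> > 0" "v1 = \<alpha> *\<^sub>R (z - y)"
    using normal_at_inner_ball_contact[OF assms v(1) n(1)] by blast
  moreover obtain \<beta> where "\<beta> > 0" "v2 = \<beta> *\<^sub>R (z - y)"
    using normal_at_inner_ball_contact[OF assms v(2) n(2)] by blast
  ultimately have "v1 = (\<alpha> / \<beta>) *\<^sub>R v2" "\<alpha> / \<beta> > 0"
    by simp_all
  with v(3) show False
    by blast
qed

lemma convex_supporting_normal:
  fixes S :: "'a::euclidean_space set"
  assumes "convex S" "interior S \<noteq> {}" "z \<in> S" "z \<notin> interior S"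
  obtains v where "v \<noteq> 0" "\<forall>x\<in>S. v \<bullet> (x - z) \<le> 0"
proof -
  have "z \<in> closure S"
    using \<open>z \<in> S\<close> closure_subset by blast
  moreover have "z \<notin> rel_interior S"
    using rel_interior_nonempty_interior[OF \<open>interior S \<noteq> {}\<close>] \<open>z \<notin> interior S\<close> by simp
  ultimately obtain a where "a \<noteq> 0" and a: "\<And>y. y \<in> closure S \<Longrightarrow> a \<bullet> z \<le> a \<bullet> y"
    using supporting_hyperplane_relative_frontier[OF \<open>convex S\<close>] by blast
  show ?thesis
  proof (rule that[of "- a"])
    show "\<forall>x\<in>S. - a \<bullet> (x - z) \<le> 0"
      using a closure_subset by (force simp: inner_diff_right)
  qed (use \<open>a \<noteq> 0\<close> in simp)
qed

lemma convex_ray_meets_boundary_once: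
  fixes S :: "'a::euclidean_space set"
  assumes "convex S" "c \<in> interior S"
    and z: "z \<in> S" "z \<notin> interior S" "z' \<in> S" "z' \<notin> interior S"
    and "0 < \<mu>" "z' - c = \<mu> *\<^sub>R (z - c)"
  shows "z' = z"
proof -
  have shrink: "c + t *\<^sub>R (x - c) \<in> interior S" if "x \<in> S" "0 \<le> t" "t < 1" for x t
    using mem_interior_convex_shrink[OF assms(1,2) that(1), of "1 - t"] that
    by (simp add: algebra_simps)
  consider "\<mu> < 1" | "\<mu> = 1" | "1 < \<mu>" by linarith
  then show ?thesis
  proof cases
    case 1
    have "z' = c + \<mu> *\<^sub>R (z - c)"
      using assms(8) by (metis add.commute diff_add_cancel)
    then have "z' \<in> interior S"
      using shrink[of z \<mu>] z(1) \<open>0 < \<mu>\<close> 1 by simp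
    with z(4) show ?thesis by contradiction
  next
    case 3
    have "z = c + (1 / \<mu>) *\<^sub>R (z' - c)"
      using assms(7,8) by simp
    then have "z \<in> interior S"
      using shrink[of z' "1 / \<mu>"] z(3) 3 by simp
    with z(2) show ?thesis by contradiction
  qed (use assms(8) in simp)
qed

lemma separating_direction_exists:
  fixes a b :: "'a::real_inner"
  assumes "a \<noteq> 0" "b \<noteq> 0" "\<not> (\<exists>\<mu>>0. b = \<mu> *\<^sub>R a)"
  shows "\<exists>e. 0 < a \<bullet> e \<and> b \<bullet> e < 0"
proof -
  have "b \<bullet> a < norm a * norm b"
  proof -
    have "b \<bullet> a \<noteq> norm b * norm a"
    proof
      assume "b \<bullet> a = norm b * norm a"
      then have eq: "norm a *\<^sub>R b = norm b *\<^sub>R a"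
        by (metis norm_cauchy_schwarz_eq)
      have "b = (1 / norm a) *\<^sub>R (norm a *\<^sub>R b)"
        using \<open>a \<noteq> 0\<close> by simp
      also have "\<dots> = (norm b / norm a) *\<^sub>R a"
        by (simp only: eq) simp
      finally have "b = (norm b / norm a) *\<^sub>R a" .
      then show False
        using assms by force
    qed
    then show ?thesis
      using norm_cauchy_schwarz[of b a] by (simp add: mult.commute)
  qed
  then show ?thesis
    using assms(1,2)
    by (intro exI[of _ "sgn a - sgn b"])
      (simp add: sgn_div_norm inner_diff_right inner_commute field_simps dot_square_norm power2_eq_square)
qed

lemma inner_balls_cannot_all_touch:
  fixes S :: "'a::euclidean_space set"
  assumes "2 \<le> DIM('a)" "convex S" "z \<notin> interior S" "0 < \<rho>"
  shows "\<exists>y\<in>ball y0 \<rho>. \<not> (\<exists>r>0. cball y r \<subseteq> S \<and> dist y z = r)"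
proof (rule ccontr)
  assume "\<not> ?thesis"
  then have touch: "\<And>y. y \<in> ball y0 \<rho> \<Longrightarrow> \<exists>r>0. cball y r \<subseteq> S \<and> dist y z = r"
    by blast
  obtain r0 where "r0 > 0" "cball y0 r0 \<subseteq> S" "dist y0 z = r0"
    using touch \<open>0 < \<rho>\<close> by force
  then have "z \<in> S"
    using mem_cball[of z y0 r0] by blast
  have "ball y0 r0 \<subseteq> interior S"
    using ball_subset_cball \<open>cball y0 r0 \<subseteq> S\<close> by (intro interior_maximal) auto
  then have "interior S \<noteq> {}"
    using \<open>r0 > 0\<close> centre_in_ball by blast
  then obtain v where v: "v \<noteq> 0" "\<forall>x\<in>S. v \<bullet> (x - z) \<le> 0"
    using convex_supporting_normal[OF \<open>convex S\<close> \<open>interior S \<noteq> {}\<close> \<open>z \<in> S\<close> \<open>z \<notin> interior S\<close>] by blast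
  (* v is a positive multiple of both z - y0 and z - y1, so no touching centre y1 can leave
     the line through y0 and z *)
  obtain w where "w \<noteq> 0" "orthogonal (z - y0) w"
    using orthogonal_to_vector_exists[OF \<open>2 \<le> DIM('a)\<close>] by blast
  define s where "s = \<rho> / (2 * norm w)"
  define y1 where "y1 = y0 + s *\<^sub>R w"
  have "s > 0"
    using \<open>w \<noteq> 0\<close> \<open>0 < \<rho>\<close> by (simp add: s_def)
  have "y1 \<in> ball y0 \<rho>"
    using \<open>w \<noteq> 0\<close> \<open>0 < \<rho>\<close> by (simp add: y1_def s_def dist_norm)
  then obtain r1 where "r1 > 0" "cball y1 r1 \<subseteq> S" "dist y1 z = r1"
    using touch by blast
  obtain \<alpha> where "v = \<alpha> *\<^sub>R (z - y0)"
    using normal_at_inner_ball_contact[OF \<open>cball y0 r0 \<subseteq> S\<close> \<open>dist y0 z = r0\<close> \<open>r0 > 0\<close> v] by blast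
  obtain \<beta> where "\<beta> > 0" "v = \<beta> *\<^sub>R (z - y1)"
    using normal_at_inner_ball_contact[OF \<open>cball y1 r1 \<subseteq> S\<close> \<open>dist y1 z = r1\<close> \<open>r1 > 0\<close> v] by blast
  have "w \<bullet> (z - y0) = 0"
    using \<open>orthogonal (z - y0) w\<close> by (simp add: orthogonal_def inner_commute)
  then have "w \<bullet> v = 0"
    using \<open>v = \<alpha> *\<^sub>R (z - y0)\<close> by simp
  moreover have "w \<bullet> v = \<beta> * (w \<bullet> (z - y0)) - \<beta> * s * (w \<bullet> w)"
    unfolding \<open>v = \<beta> *\<^sub>R (z - y1)\<close> y1_def by (simp add: inner_diff_right inner_add_right algebra_simps)
  ultimately show False
    using \<open>w \<bullet> (z - y0) = 0\<close> \<open>\<beta> > 0\<close> \<open>s > 0\<close> \<open>w \<noteq> 0\<close> by simp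
qed

section \<open>Density of nondifferentiability points\<close>

lemma nearest_boundary_point_map:
  fixes S :: "'a::euclidean_space set"
  assumes "closed S" "S \<noteq> UNIV" "B \<subseteq> interior S"
    and diff: "\<And>y. y \<in> B \<Longrightarrow> (\<lambda>x. infdist x (- S)) differentiable (at y)"
  obtains Z where "continuous_on B Z"
    "\<And>y. y \<in> B \<Longrightarrow> Z y \<in> frontier S \<and> 0 < dist y (Z y) \<and> cball y (dist y (Z y)) \<subseteq> S"
proof -
  define F where "F = closure (- S)"
  have dF: "infdist x F = infdist x (- S)" for x
    by (simp add: F_def infdist_eq_setdist)
  have "closed F" "F \<noteq> {}"
    using \<open>S \<noteq> UNIV\<close> closure_subset by (auto simp: F_def)
  define Z where "Z y = (SOME z. z \<in> F \<and> dist y z = infdist y F)" for y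
  have Z: "Z y \<in> F \<and> dist y (Z y) = infdist y F" for y
    unfolding Z_def by (rule someI_ex) (metis infdist_attains_inf[OF \<open>closed F\<close> \<open>F \<noteq> {}\<close>])
  have pos: "0 < infdist y F" if "y \<in> B" for y
    using that \<open>B \<subseteq> interior S\<close> infdist_pos_not_in_closed[OF \<open>closed F\<close> \<open>F \<noteq> {}\<close>]
    by (auto simp: F_def closure_complement)
  have unique: "z = Z y" if "y \<in> B" "z \<in> F" "dist y z = infdist y F" for y z
    using nearest_point_unique_if_differentiable[of F y] diff[OF \<open>y \<in> B\<close>] pos[OF \<open>y \<in> B\<close>] Z that
    by (simp add: dF)
  show ?thesis
  proof
    show "continuous_on B Z"
      by (rule continuous_on_nearest_point[OF \<open>closed F\<close>]) (use Z unique in auto)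
  next
    fix y assume "y \<in> B"
    then have "y \<in> S"
      using \<open>B \<subseteq> interior S\<close> interior_subset by blast
    then have ball: "cball y (dist y (Z y)) \<subseteq> S"
      using cball_subset_iff_infdist_compl[OF \<open>closed S\<close> \<open>S \<noteq> UNIV\<close>] Z[of y] by (simp add: dF infdist_nonneg)
    moreover have "Z y \<in> frontier S"
      using ball Z[of y] \<open>closed S\<close> by (auto simp: F_def frontier_def closure_complement)
    ultimately show "Z y \<in> frontier S \<and> 0 < dist y (Z y) \<and> cball y (dist y (Z y)) \<subseteq> S"
      using Z[of y] pos[OF \<open>y \<in> B\<close>] by simp
  qed
qed

lemma dense_direction_separates_boundary_points:
  fixes S :: "'a::euclidean_space set"
  assumes "convex S" "c \<in> interior S" "closure (range e) = UNIV"
    and z: "z \<in> S" "z \<notin> interior S" "z' \<in> S" "z' \<notin> interior S" "z' \<noteq> z"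
  obtains k where "e k \<bullet> (z' - c) < 0" "0 < e k \<bullet> (z - c)"
proof -
  have "z - c \<noteq> 0" "z' - c \<noteq> 0"
    using z \<open>c \<in> interior S\<close> by auto
  moreover have "\<not> (\<exists>\<mu>>0. z' - c = \<mu> *\<^sub>R (z - c))"
    using convex_ray_meets_boundary_once[OF \<open>convex S\<close> \<open>c \<in> interior S\<close> z(1-4)] z(5) by blast
  ultimately obtain d where "d \<in> {d. 0 < (z - c) \<bullet> d} \<inter> {d. (z' - c) \<bullet> d < 0}"
    using separating_direction_exists by blast
  then obtain k where "e k \<in> {d. 0 < (z - c) \<bullet> d} \<inter> {d. (z' - c) \<bullet> d < 0}"
    using open_Int_closure_eq_empty[OF open_Int[OF open_halfspace_gt open_halfspace_lt], of 0 "z - c" "z' - c" 0 "range e"]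
      \<open>closure (range e) = UNIV\<close> by blast
  then show ?thesis
    by (intro that[of k]) (auto simp: inner_commute)
qed

lemma no_continuous_inner_touching_map:
  fixes S :: "'a::euclidean_space set"
  assumes "2 \<le> DIM('a)" "convex S" "c \<in> interior S" "0 < \<rho>" "closure (range e) = UNIV"
    and corners: "\<And>k z. e k \<noteq> 0 \<Longrightarrow> z \<in> frontier S \<Longrightarrow> e k \<bullet> (z - c) = 0 \<Longrightarrow> corner S z"
    and "continuous_on (ball y0 \<rho>) Z"
    and Z: "\<And>y. y \<in> ball y0 \<rho> \<Longrightarrow> Z y \<in> frontier S \<and> 0 < dist y (Z y) \<and> cball y (dist y (Z y)) \<subseteq> S"
  shows False
proof -
  have bdry: "Z y \<in> S" "Z y \<notin> interior S" if "y \<in> ball y0 \<rho>" for y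
    using Z[OF that] by (auto simp: frontier_def)
  have "y0 \<in> ball y0 \<rho>"
    using \<open>0 < \<rho>\<close> by simp
  obtain y1 where "y1 \<in> ball y0 \<rho>" "Z y1 \<noteq> Z y0"
    using inner_balls_cannot_all_touch[OF \<open>2 \<le> DIM('a)\<close> \<open>convex S\<close> bdry(2)[OF \<open>y0 \<in> ball y0 \<rho>\<close>] \<open>0 < \<rho>\<close>, of y0]
      Z by metis
  then obtain k where "e k \<bullet> (Z y1 - c) < 0" "0 < e k \<bullet> (Z y0 - c)"
    using dense_direction_separates_boundary_points[OF \<open>convex S\<close> \<open>c \<in> interior S\<close> \<open>closure (range e) = UNIV\<close>]
      bdry \<open>y0 \<in> ball y0 \<rho>\<close> by metis
  moreover have "connected (Z ` ball y0 \<rho>)"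
    using connected_continuous_image[OF \<open>continuous_on (ball y0 \<rho>) Z\<close> connected_ball] .
  ultimately obtain y where "y \<in> ball y0 \<rho>" "e k \<bullet> (Z y - c) = 0"
    using connected_ivt_hyperplane[of "Z ` ball y0 \<rho>" "Z y1" "Z y0" "e k" "e k \<bullet> c"]
      \<open>y0 \<in> ball y0 \<rho>\<close> \<open>y1 \<in> ball y0 \<rho>\<close> by (force simp: inner_diff_right)
  moreover have "e k \<noteq> 0"
    using \<open>0 < e k \<bullet> (Z y0 - c)\<close> by auto
  ultimately have "corner S (Z y)"
    using corners Z by blast
  moreover have "\<not> corner S (Z y)"
    using not_corner_at_inner_ball_contact Z[OF \<open>y \<in> ball y0 \<rho>\<close>] by blast
  ultimately show False
    by contradiction
qed

lemma infdist_compl_nondifferentiable_dense: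
  fixes S :: "'a::euclidean_space set"
  assumes "2 \<le> DIM('a)" "closed S" "convex S" "S \<noteq> UNIV" "c \<in> interior S" "closure (range e) = UNIV"
    and corners: "\<And>k z. e k \<noteq> 0 \<Longrightarrow> z \<in> frontier S \<Longrightarrow> e k \<bullet> (z - c) = 0 \<Longrightarrow> corner S z"
  shows "interior S \<subseteq> closure {y \<in> interior S. \<not> (\<lambda>x. infdist x (- S)) differentiable (at y)}"
proof
  fix y0 assume "y0 \<in> interior S"
  show "y0 \<in> closure {y \<in> interior S. \<not> (\<lambda>x. infdist x (- S)) differentiable (at y)}"
    unfolding closure_approachable
  proof (intro allI impI)
    fix \<epsilon> :: real assume "0 < \<epsilon>"
    obtain \<rho>0 where "0 < \<rho>0" "ball y0 \<rho>0 \<subseteq> interior S"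
      using \<open>y0 \<in> interior S\<close> open_interior open_contains_ball by blast
    define \<rho> where "\<rho> = min \<epsilon> \<rho>0"
    have "0 < \<rho>" "ball y0 \<rho> \<subseteq> interior S"
      using \<open>0 < \<epsilon>\<close> \<open>0 < \<rho>0\<close> \<open>ball y0 \<rho>0 \<subseteq> interior S\<close> by (auto simp: \<rho>_def)
    have "\<exists>y\<in>ball y0 \<rho>. \<not> (\<lambda>x. infdist x (- S)) differentiable (at y)"
    proof (rule ccontr)
      assume "\<not> ?thesis"
      then obtain Z where Z: "continuous_on (ball y0 \<rho>) Z"
        "\<And>y. y \<in> ball y0 \<rho> \<Longrightarrow> Z y \<in> frontier S \<and> 0 < dist y (Z y) \<and> cball y (dist y (Z y)) \<subseteq> S"
        using nearest_boundary_point_map[OF \<open>closed S\<close> \<open>S \<noteq> UNIV\<close> \<open>ball y0 \<rho> \<subseteq> interior S\<close>] by blast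
      show False
        by (rule no_continuous_inner_touching_map[OF assms(1,3,5) \<open>0 < \<rho>\<close> assms(6) corners Z])
    qed
    then show "\<exists>y\<in>{y \<in> interior S. \<not> (\<lambda>x. infdist x (- S)) differentiable (at y)}. dist y y0 < \<epsilon>"
      using \<open>ball y0 \<rho> \<subseteq> interior S\<close> by (force simp: \<rho>_def dist_commute)
  qed
qed

section \<open>Convex sets creased along a dense family of lines\<close>

lemma convex_strict_epigraph:
  assumes "convex_on UNIV g"
  shows "convex {p. g (fst p) < snd p}"
proof (rule convexI)
  fix p q :: "'a \<times> real" and u v :: real
  assume p: "p \<in> {p. g (fst p) < snd p}" and q: "q \<in> {p. g (fst p) < snd p}"
    and "0 \<le> u" "0 \<le> v" "u + v = 1"
  have "u * g (fst p) + v * g (fst q) < u * snd p + v * snd q"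
  proof (cases "u = 0")
    case False
    then have "u * g (fst p) < u * snd p"
      using p \<open>0 \<le> u\<close> by simp
    moreover have "v * g (fst q) \<le> v * snd q"
      using q \<open>0 \<le> v\<close> by (simp add: mult_left_mono)
    ultimately show ?thesis
      by simp
  qed (use q \<open>u + v = 1\<close> in simp)
  moreover have "g (u *\<^sub>R fst p + v *\<^sub>R fst q) \<le> u * g (fst p) + v * g (fst q)"
    using assms \<open>0 \<le> u\<close> \<open>0 \<le> v\<close> \<open>u + v = 1\<close> by (simp add: convex_on_def)
  ultimately show "u *\<^sub>R p + v *\<^sub>R q \<in> {p. g (fst p) < snd p}"
    by simp
qed

lemma convex_on_subgradient_exists:
  fixes g :: "'a::euclidean_space \<Rightarrow> real"
  assumes "convex_on UNIV g"
  obtains u where "\<And>x. g z + u \<bullet> (x - z) \<le> g x"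
proof -
  have "convex ((\<lambda>p. p - (z, g z)) ` {p. g (fst p) < snd p})"
    using convex_strict_epigraph[OF assms] by simp
  moreover have "0 \<notin> (\<lambda>p. p - (z, g z)) ` {p. g (fst p) < snd p}"
    by (force simp: zero_prod_def)
  ultimately obtain a where "a \<noteq> 0" and a: "\<forall>q \<in> (\<lambda>p. p - (z, g z)) ` {p. g (fst p) < snd p}. 0 \<le> a \<bullet> q"
    using separating_hyperplane_set_0 by blast
  obtain w \<beta> where "a = (w, \<beta>)"
    by fastforce
  have above: "0 \<le> w \<bullet> (x - z) + \<beta> * (t - g z)" if "g x < t" for x t
    using a that unfolding \<open>a = (w, \<beta>)\<close> by force
  have "0 \<le> \<beta>"
    using above[of z "g z + 1"] by simp
  moreover have "\<beta> \<noteq> 0"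
  proof
    assume "\<beta> = 0"
    then have "0 \<le> w \<bullet> (- w)"
      using above[of "z - w" "g (z - w) + 1"] by simp
    then show False
      using \<open>a \<noteq> 0\<close> \<open>a = (w, \<beta>)\<close> \<open>\<beta> = 0\<close> by (simp add: zero_prod_def) (meson inner_gt_zero_iff not_le)
  qed
  ultimately have "0 < \<beta>"
    by simp
  have "g z + (- (1 / \<beta>) *\<^sub>R w) \<bullet> (x - z) \<le> g x" for x
  proof -
    have "- (w \<bullet> (x - z)) \<le> \<beta> * (g x - g z)"
    proof (rule field_le_epsilon)
      fix \<epsilon> :: real assume "0 < \<epsilon>"
      then show "- (w \<bullet> (x - z)) \<le> \<beta> * (g x - g z) + \<epsilon>"
        using above[of x "g x + \<epsilon> / \<beta>"] \<open>0 < \<beta>\<close> by (simp add: algebra_simps)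
    qed
    then show ?thesis
      using \<open>0 < \<beta>\<close> by (simp add: field_simps)
  qed
  then show ?thesis
    by (rule that)
qed

lemma corner_of_kinked_sublevel:
  fixes g :: "'a::euclidean_space \<Rightarrow> real"
  assumes "convex_on UNIV g" "0 < a" "e \<noteq> 0" "g c < g z" "e \<bullet> (z - c) = 0"
  shows "corner {x. g x + a * \<bar>e \<bullet> (x - c)\<bar> \<le> g z} z"
proof -
  obtain u where u: "\<And>x. g z + u \<bullet> (x - z) \<le> g x"
    using convex_on_subgradient_exists[OF assms(1)] by blast
  define v where "v s = u + (s * a) *\<^sub>R e" for s :: real
  have "0 < u \<bullet> (z - c)"
    using u[of c] \<open>g c < g z\<close> by (simp add: inner_diff_right)
  then have vz: "0 < v s \<bullet> (z - c)" for s
    using \<open>e \<bullet> (z - c) = 0\<close> by (simp add: v_def inner_add_left)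
  have normal: "v s \<bullet> (x - z) \<le> 0"
    if "s = 1 \<or> s = - 1" "g x + a * \<bar>e \<bullet> (x - c)\<bar> \<le> g z" for s x
  proof -
    have "v s \<bullet> (x - z) = u \<bullet> (x - z) + a * (s * (e \<bullet> (x - c)))"
      using \<open>e \<bullet> (z - c) = 0\<close> by (simp add: v_def inner_add_left inner_diff_right algebra_simps)
    also have "\<dots> \<le> (g x - g z) + a * \<bar>e \<bullet> (x - c)\<bar>"
      using u[of x] that(1) \<open>0 < a\<close> by (intro add_mono mult_left_mono) auto
    finally show ?thesis
      using that(2) by simp
  qed
  have not_parallel: "v 1 \<noteq> \<mu> *\<^sub>R v (- 1)" if "0 < \<mu>" for \<mu>
  proof
    assume eq: "v 1 = \<mu> *\<^sub>R v (- 1)"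
    then have "v 1 \<bullet> (z - c) = \<mu> * (v (- 1) \<bullet> (z - c))"
      by simp
    moreover have "v 1 \<bullet> (z - c) = v (- 1) \<bullet> (z - c)"
      using \<open>e \<bullet> (z - c) = 0\<close> by (simp add: v_def inner_add_left inner_diff_left)
    ultimately have "\<mu> = 1"
      using vz[of 1] by simp
    with eq have "v 1 \<bullet> e = v (- 1) \<bullet> e"
      by simp
    then have "a * (e \<bullet> e) = 0"
      by (simp add: v_def inner_add_left inner_diff_left)
    with \<open>0 < a\<close> \<open>e \<noteq> 0\<close> show False
      by simp
  qed
  have "v 1 \<noteq> 0" "v (- 1) \<noteq> 0"
    using vz[of 1] vz[of "- 1"] by auto
  with not_parallel show ?thesis
    unfolding corner_def using normal[of 1] normal[of "- 1"]
    by (intro exI[of _ "v 1"] exI[of _ "v (- 1)"]) simp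
qed

lemma convex_on_infdist:
  fixes K :: "'a::real_normed_vector set"
  assumes "convex K"
  shows "convex_on UNIV (\<lambda>x. infdist x K)"
proof (cases "K = {}")
  case False
  show ?thesis
  proof (rule convex_onI)
    fix t :: real and x y :: 'a assume "0 < t" "t < 1"
    show "infdist ((1 - t) *\<^sub>R x + t *\<^sub>R y) K \<le> (1 - t) * infdist x K + t * infdist y K"
    proof (rule field_le_epsilon)
      fix \<epsilon> :: real assume "0 < \<epsilon>"
      have near: "\<exists>a\<in>K. dist p a < infdist p K + \<epsilon>" for p
        using cInf_lessD[of "dist p ` K" "infdist p K + \<epsilon>"] \<open>0 < \<epsilon>\<close> False
        by (auto simp: infdist_notempty)
      obtain a b where "a \<in> K" "dist x a < infdist x K + \<epsilon>" "b \<in> K" "dist y b < infdist y K + \<epsilon>"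
        using near[of x] near[of y] by blast
      have "infdist ((1 - t) *\<^sub>R x + t *\<^sub>R y) K \<le> dist ((1 - t) *\<^sub>R x + t *\<^sub>R y) ((1 - t) *\<^sub>R a + t *\<^sub>R b)"
        using convexD[OF \<open>convex K\<close> \<open>a \<in> K\<close> \<open>b \<in> K\<close>, of "1 - t" t] \<open>0 < t\<close> \<open>t < 1\<close>
        by (intro infdist_le) auto
      also have "\<dots> = norm ((1 - t) *\<^sub>R (x - a) + t *\<^sub>R (y - b))"
        by (simp add: dist_norm algebra_simps)
      also have "\<dots> \<le> (1 - t) * dist x a + t * dist y b"
        using norm_triangle_ineq[of "(1 - t) *\<^sub>R (x - a)" "t *\<^sub>R (y - b)"] \<open>0 < t\<close> \<open>t < 1\<close>
        by (simp add: dist_norm)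
      also have "\<dots> \<le> (1 - t) * (infdist x K + \<epsilon>) + t * (infdist y K + \<epsilon>)"
        using \<open>dist x a < _\<close> \<open>dist y b < _\<close> \<open>0 < t\<close> \<open>t < 1\<close>
        by (intro add_mono mult_left_mono) auto
      finally show "infdist ((1 - t) *\<^sub>R x + t *\<^sub>R y) K \<le> (1 - t) * infdist x K + t * infdist y K + \<epsilon>"
        by (simp add: algebra_simps)
    qed
  qed simp
qed (simp add: infdist_def convex_on_const)

lemma convex_sublevel:
  assumes "convex_on UNIV f"
  shows "convex {x. f x \<le> a}"
proof (rule convexI)
  fix x y :: 'a and u v :: real
  assume "x \<in> {x. f x \<le> a}" "y \<in> {x. f x \<le> a}" "0 \<le> u" "0 \<le> v" "u + v = 1"
  moreover from this have "f (u *\<^sub>R x + v *\<^sub>R y) \<le> u * f x + v * f y"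
    using assms by (simp add: convex_on_def)
  moreover have "u * f x + v * f y \<le> u * a + v * a"
    using calculation by (intro add_mono mult_left_mono) auto
  ultimately show "u *\<^sub>R x + v *\<^sub>R y \<in> {x. f x \<le> a}"
    by (simp add: distrib_right[symmetric])
qed

definition crease_sum :: "(nat \<Rightarrow> real) \<Rightarrow> (nat \<Rightarrow> 'a::real_inner) \<Rightarrow> 'a \<Rightarrow> 'a \<Rightarrow> real" where
  "crease_sum b e c x = (\<Sum>k. b k * \<bar>e k \<bullet> (x - c)\<bar>)"

lemma summable_crease_terms:
  assumes "\<And>k. 0 \<le> b k" "summable (\<lambda>k. b k * norm (e k))"
  shows "summable (\<lambda>k. b k * \<bar>e k \<bullet> (x - c)\<bar>)"
proof (rule summable_comparison_test'[OF summable_mult2[OF assms(2), of "norm (x - c)"]])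
  fix k
  show "norm (b k * \<bar>e k \<bullet> (x - c)\<bar>) \<le> b k * norm (e k) * norm (x - c)"
    using Cauchy_Schwarz_ineq2[of "e k" "x - c"] assms(1)[of k]
    by (simp add: abs_mult mult.assoc mult_left_mono)
qed

lemma crease_sum_nonneg:
  assumes "\<And>k. 0 \<le> b k" "summable (\<lambda>k. b k * norm (e k))"
  shows "0 \<le> crease_sum b e c x"
  unfolding crease_sum_def using assms by (intro suminf_nonneg summable_crease_terms) auto

lemma convex_on_crease_sum:
  assumes "\<And>k. 0 \<le> b k" "summable (\<lambda>k. b k * norm (e k))"
  shows "convex_on UNIV (crease_sum b e c)"
proof (rule convex_onI)
  fix t :: real and x y :: 'a assume "0 < t" "t < 1"
  note summable = summable_crease_terms[OF assms]
  have "crease_sum b e c ((1 - t) *\<^sub>R x + t *\<^sub>R y)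
      \<le> (\<Sum>k. (1 - t) * (b k * \<bar>e k \<bullet> (x - c)\<bar>) + t * (b k * \<bar>e k \<bullet> (y - c)\<bar>))"
    unfolding crease_sum_def
  proof (rule suminf_le)
    fix k
    have "(1 - t) *\<^sub>R x + t *\<^sub>R y - c = (1 - t) *\<^sub>R (x - c) + t *\<^sub>R (y - c)"
      by (simp add: algebra_simps)
    then have "\<bar>e k \<bullet> ((1 - t) *\<^sub>R x + t *\<^sub>R y - c)\<bar> \<le> (1 - t) * \<bar>e k \<bullet> (x - c)\<bar> + t * \<bar>e k \<bullet> (y - c)\<bar>"
      using \<open>0 < t\<close> \<open>t < 1\<close> abs_triangle_ineq[of "(1 - t) * (e k \<bullet> (x - c))" "t * (e k \<bullet> (y - c))"]
      by (simp add: inner_add_right abs_mult)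
    then have "b k * \<bar>e k \<bullet> ((1 - t) *\<^sub>R x + t *\<^sub>R y - c)\<bar>
        \<le> b k * ((1 - t) * \<bar>e k \<bullet> (x - c)\<bar> + t * \<bar>e k \<bullet> (y - c)\<bar>)"
      using assms(1) by (rule mult_left_mono)
    then show "b k * \<bar>e k \<bullet> ((1 - t) *\<^sub>R x + t *\<^sub>R y - c)\<bar>
        \<le> (1 - t) * (b k * \<bar>e k \<bullet> (x - c)\<bar>) + t * (b k * \<bar>e k \<bullet> (y - c)\<bar>)"
      by (simp only: distrib_left mult.left_commute)
  qed (intro summable summable_add summable_mult)+
  also have "\<dots> = (1 - t) * crease_sum b e c x + t * crease_sum b e c y"
    unfolding crease_sum_def
    by (simp add: suminf_add[symmetric] suminf_mult summable summable_mult)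
  finally show "crease_sum b e c ((1 - t) *\<^sub>R x + t *\<^sub>R y) \<le> (1 - t) * crease_sum b e c x + t * crease_sum b e c y" .
qed simp

lemma crease_sum_split:
  assumes "\<And>k. 0 \<le> b k" "summable (\<lambda>k. b k * norm (e k))"
  shows "crease_sum b e c x = crease_sum (b(k := 0)) e c x + b k * \<bar>e k \<bullet> (x - c)\<bar>"
proof -
  let ?f = "\<lambda>j. b j * \<bar>e j \<bullet> (x - c)\<bar>"
  have "(\<lambda>j. ?f j - (if j = k then ?f j else 0)) sums (crease_sum b e c x - ?f k)"
    unfolding crease_sum_def
    by (intro sums_diff summable_sums summable_crease_terms[OF assms] sums_single)
  moreover have "(\<lambda>j. ?f j - (if j = k then ?f j else 0)) = (\<lambda>j. (b(k := 0)) j * \<bar>e j \<bullet> (x - c)\<bar>)"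
    by auto
  ultimately show ?thesis
    unfolding crease_sum_def[of "b(k := 0)"] by (simp add: sums_iff)
qed

definition crease_weight :: "(nat \<Rightarrow> 'a::real_normed_vector) \<Rightarrow> nat \<Rightarrow> real" where
  "crease_weight e k = (1 / 2) ^ k / (1 + norm (e k))"

lemma crease_weight_pos: "0 < crease_weight e k"
  unfolding crease_weight_def by (simp add: add_pos_nonneg)

lemma summable_crease_weight: "summable (\<lambda>k. crease_weight e k * norm (e k))"
proof (rule summable_comparison_test'[OF summable_geometric[of "1 / 2 :: real"]])
  fix k
  have pos: "0 < 1 + norm (e k)"
    by (simp add: add_pos_nonneg)
  have "(1 / 2) ^ k * norm (e k) \<le> (1 / 2 :: real) ^ k * (1 + norm (e k))"
    by (intro mult_left_mono) auto
  then have "(1 / 2) ^ k * norm (e k) / (1 + norm (e k)) \<le> (1 / 2 :: real) ^ k"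
    using pos by (simp add: divide_le_eq)
  then show "norm (crease_weight e k * norm (e k)) \<le> (1 / 2) ^ k"
    using pos by (simp add: crease_weight_def)
qed simp

lemma frontier_sublevel_subset:
  fixes f :: "'a::topological_space \<Rightarrow> real"
  assumes "continuous_on UNIV f"
  shows "frontier {x. f x \<le> a} \<subseteq> {x. f x = a}"
proof
  fix z assume z: "z \<in> frontier {x. f x \<le> a}"
  have "closed {x. f x \<le> a}"
    using assms by (intro closed_Collect_le continuous_on_const)
  then have "f z \<le> a"
    using z frontier_subset_closed by blast
  moreover have "{x. f x < a} \<subseteq> interior {x. f x \<le> a}"
    using assms by (intro interior_maximal open_Collect_less continuous_on_const) auto
  ultimately show "z \<in> {x. f x = a}"
    using z by (force simp: frontier_def)
qed

lemma corner_of_crease_sum_sublevel: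
  fixes h :: "'a::euclidean_space \<Rightarrow> real"
  assumes "convex_on UNIV h" "0 < \<eta>" "\<And>j. 0 \<le> b j" "0 < b k" "summable (\<lambda>j. b j * norm (e j))"
    and "e k \<noteq> 0" "e k \<bullet> (z - c) = 0" "h c < \<delta>"
    and z: "z \<in> frontier {x. h x + \<eta> * crease_sum b e c x \<le> \<delta>}"
  shows "corner {x. h x + \<eta> * crease_sum b e c x \<le> \<delta>} z"
proof -
  let ?b = "b(k := 0)"
  define g where "g x = h x + \<eta> * crease_sum ?b e c x" for x
  have b_nonneg: "0 \<le> ?b j" for j
    using assms(3)[of j] by simp
  have "summable (\<lambda>j. ?b j * norm (e j))"
    by (rule summable_comparison_test'[OF assms(5)]) (simp add: assms(3))
  then have "convex_on UNIV g"
    unfolding g_def using assms(1,2) b_nonneg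
    by (intro convex_on_add convex_on_cmul convex_on_crease_sum) auto
  have "continuous_on UNIV (\<lambda>x. h x + \<eta> * crease_sum b e c x)"
    using assms(1-3,5)
    by (intro convex_on_continuous[OF open_UNIV] convex_on_add convex_on_cmul convex_on_crease_sum) auto
  then have "h z + \<eta> * crease_sum b e c z = \<delta>"
    using frontier_sublevel_subset z by blast
  moreover have split: "h x + \<eta> * crease_sum b e c x = g x + (\<eta> * b k) * \<bar>e k \<bullet> (x - c)\<bar>" for x
    using crease_sum_split[OF assms(3,5), of c x k] by (simp add: g_def algebra_simps)
  ultimately have "g z = \<delta>"
    using assms(7) by simp
  moreover have "g c = h c"
    by (simp add: g_def crease_sum_def)
  ultimately have "corner {x. g x + (\<eta> * b k) * \<bar>e k \<bullet> (x - c)\<bar> \<le> g z} z"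
    using assms(8) by (intro corner_of_kinked_sublevel[OF \<open>convex_on UNIV g\<close>]) (use assms(2,4,6,7) in auto)
  then show ?thesis
    by (simp add: split \<open>g z = \<delta>\<close>)
qed

lemma hausdorff_dist_le_of_subset:
  fixes A B :: "'a::metric_space set"
  assumes "A \<noteq> {}" "A \<subseteq> B" "\<And>x. x \<in> B \<Longrightarrow> infdist x A \<le> \<delta>" "0 \<le> \<delta>"
  shows "hausdorff_dist A B \<le> \<delta>"
  unfolding hausdorff_dist_def
proof (rule max.boundedI)
  show "(SUP a\<in>A. infdist a B) \<le> \<delta>"
    using assms by (intro cSUP_least) auto
  show "(SUP b\<in>B. infdist b A) \<le> \<delta>"
    using assms by (intro cSUP_least) auto
qed

lemma creased_outer_approximation:
  fixes K :: "'a::euclidean_space set" and e :: "nat \<Rightarrow> 'a"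
  assumes "compact K" "convex K" "c \<in> K" "0 < \<delta>"
  obtains S where "compact S" "convex S" "K \<subseteq> S" "\<And>x. x \<in> S \<Longrightarrow> infdist x K \<le> \<delta>"
    and "\<And>k z. e k \<noteq> 0 \<Longrightarrow> z \<in> frontier S \<Longrightarrow> e k \<bullet> (z - c) = 0 \<Longrightarrow> corner S z"
proof -
  define \<psi> where "\<psi> = crease_sum (crease_weight e) e c"
  note weight = crease_weight_pos[of e, THEN less_imp_le] summable_crease_weight[of e]
  have "convex_on UNIV \<psi>"
    unfolding \<psi>_def using weight by (rule convex_on_crease_sum)
  then have "continuous_on K \<psi>"
    using convex_on_continuous[OF open_UNIV] continuous_on_subset by blast
  then obtain B where "0 < B" and B: "\<And>x. x \<in> K \<Longrightarrow> \<psi> x \<le> B"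
    using compact_imp_bounded[OF compact_continuous_image[OF _ \<open>compact K\<close>]]
    by (force simp: bounded_pos abs_le_iff)
  define f where "f x = infdist x K + (\<delta> / B) * \<psi> x" for x
  define S where "S = {x. f x \<le> \<delta>}"
  have "convex_on UNIV f"
    unfolding f_def using \<open>convex_on UNIV \<psi>\<close> \<open>0 < B\<close> \<open>0 < \<delta>\<close>
    by (intro convex_on_add convex_on_infdist[OF \<open>convex K\<close>] convex_on_cmul) auto
  then have "continuous_on UNIV f"
    by (rule convex_on_continuous[OF open_UNIV])
  have near: "infdist x K \<le> \<delta>" if "x \<in> S" for x
  proof -
    have "0 \<le> (\<delta> / B) * \<psi> x"
      using \<open>0 < B\<close> \<open>0 < \<delta>\<close> crease_sum_nonneg[OF weight, of c x] by (simp add: \<psi>_def)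
    then show ?thesis
      using that by (simp add: S_def f_def)
  qed
  show ?thesis
  proof
    have "closed S"
      unfolding S_def by (intro closed_Collect_le \<open>continuous_on UNIV f\<close> continuous_on_const)
    moreover have "bounded {x. infdist x K \<le> \<delta>}"
      using \<open>c \<in> K\<close> by (intro compact_imp_bounded compact_infdist_le \<open>compact K\<close> \<open>0 < \<delta>\<close>) blast
    ultimately show "compact S"
      using near by (simp add: compact_eq_bounded_closed bounded_subset subset_iff)
    show "convex S"
      unfolding S_def by (rule convex_sublevel[OF \<open>convex_on UNIV f\<close>])
    show "K \<subseteq> S"
    proof
      fix x assume "x \<in> K"
      then have "(\<delta> / B) * \<psi> x \<le> (\<delta> / B) * B"
        using B \<open>0 < B\<close> \<open>0 < \<delta>\<close> by (intro mult_left_mono) auto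
      then show "x \<in> S"
        using \<open>x \<in> K\<close> \<open>0 < B\<close> by (simp add: S_def f_def)
    qed
  next
    fix k z assume "e k \<noteq> 0" "z \<in> frontier S" "e k \<bullet> (z - c) = 0"
    then show "corner S z"
      unfolding S_def f_def \<psi>_def using weight crease_weight_pos \<open>c \<in> K\<close> \<open>0 < B\<close> \<open>0 < \<delta>\<close>
      by (intro corner_of_crease_sum_sublevel[OF convex_on_infdist[OF \<open>convex K\<close>]]) auto
  qed (use near in auto)
qed

lemma horizon_nondiff_points_dense:
  fixes S :: "(real^2) set"
  assumes "compact S" "convex S" "c \<in> interior S" "closure (range e) = UNIV"
    and corners: "\<And>k z. e k \<noteq> 0 \<Longrightarrow> z \<in> frontier S \<Longrightarrow> e k \<bullet> (z - c) = 0 \<Longrightarrow> corner S z"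
  shows "future_cauchy_horizon S \<subseteq> closure (nondiff_points (future_cauchy_horizon S))"
proof -
  have "closed S" "S \<noteq> UNIV"
    using \<open>compact S\<close> compact_imp_closed compact_imp_bounded not_bounded_UNIV by auto
  have "S = closure (interior S)"
    using convex_closure_interior[OF \<open>convex S\<close>] \<open>c \<in> interior S\<close> \<open>closed S\<close> by auto
  also have "\<dots> \<subseteq> closure {y \<in> interior S. \<not> (\<lambda>x. infdist x (- S)) differentiable (at y)}"
    using infdist_compl_nondifferentiable_dense[OF _ \<open>closed S\<close> \<open>convex S\<close> \<open>S \<noteq> UNIV\<close> \<open>c \<in> interior S\<close>
        \<open>closure (range e) = UNIV\<close>] corners
    by (simp add: closure_minimal)
  also have "\<dots> \<subseteq> closure {y \<in> S. \<not> (\<lambda>x. infdist x (- S)) differentiable (at y)}"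
    using interior_subset by (intro closure_mono) blast
  finally show ?thesis
    unfolding future_cauchy_horizon_eq_graph[OF \<open>closed S\<close> \<open>S \<noteq> UNIV\<close>]
    by (intro graph_subset_closure_nondiff_points \<open>closed S\<close> continuous_on_infdist continuous_on_id)
qed

lemma dense_sequence_exists:
  obtains e :: "nat \<Rightarrow> 'a::second_countable_topology" where "closure (range e) = UNIV"
proof -
  obtain D :: "'a set" where "countable D" and dense: "\<And>U. open U \<Longrightarrow> U \<noteq> {} \<Longrightarrow> \<exists>d\<in>D. d \<in> U"
    using countable_dense_setE by blast
  have "interior (- D) = {}"
    using dense[OF open_interior] interior_subset by blast
  then have "closure D = UNIV"
    by (simp add: closure_interior)
  moreover have "range (from_nat_into D) = D"
    using \<open>closure D = UNIV\<close> \<open>countable D\<close> by (intro range_from_nat_into) auto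
  ultimately show ?thesis
    using that by metis
qed

theorem theorem3:
  fixes K :: "(real^2) set" and \<epsilon> :: real
  assumes "compact K" "convex K" "interior K \<noteq> {}" "\<epsilon> > 0"
  shows "\<exists>K' :: (real^2) set. compact K' \<and> convex K' \<and> interior K' \<noteq> {} \<and>
           hausdorff_dist K K' < \<epsilon> \<and>
           future_cauchy_horizon K' \<subseteq> closure (nondiff_points (future_cauchy_horizon K'))"
proof -
  obtain c where c: "c \<in> interior K"
    using assms(3) by blast
  obtain e :: "nat \<Rightarrow> real^2" where e: "closure (range e) = UNIV"
    using dense_sequence_exists by blast
  have "0 < \<epsilon> / 2"
    using assms(4) by simp
  obtain S where S: "compact S" "convex S" "K \<subseteq> S" "\<And>x. x \<in> S \<Longrightarrow> infdist x K \<le> \<epsilon> / 2"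
    and corners: "\<And>k z. e k \<noteq> 0 \<Longrightarrow> z \<in> frontier S \<Longrightarrow> e k \<bullet> (z - c) = 0 \<Longrightarrow> corner S z"
    using creased_outer_approximation[OF assms(1,2) interior_subset[THEN subsetD, OF c] \<open>0 < \<epsilon> / 2\<close>]
    by blast
  have "c \<in> interior S"
    using c interior_mono[OF \<open>K \<subseteq> S\<close>] by blast
  moreover have "hausdorff_dist K S \<le> \<epsilon> / 2"
    using c interior_subset assms(4) by (intro hausdorff_dist_le_of_subset[OF _ \<open>K \<subseteq> S\<close> S(4)]) auto
  moreover have "future_cauchy_horizon S \<subseteq> closure (nondiff_points (future_cauchy_horizon S))"
    by (rule horizon_nondiff_points_dense[OF S(1,2) \<open>c \<in> interior S\<close> e corners])
  ultimately show ?thesis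
    using S(1,2) assms(4) by (intro exI[of _ S]) auto
qed

end
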